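(* Let $g$ be a completely additive arithmetic function. Then for every positive integer $n$, $$(\Lambda_{Ld}\ast g)(n)=g(n)Ld(n)-\frac12\sum_{p^\alpha\parallel n}\frac{\alpha(\alpha+1)g(p)}{p}.$$
   Context: The arithmetic logarithmic derivative is $Ld(n)=\sum_{p^\alpha\parallel n}\frac{\alpha}{p}$ (sum over primes $p\mid n$, $\alpha$ the exact exponent of $p$ in $n$). $\Lambda_{Ld}(n)=\frac1p$ if $n=p^k$ for some prime $p$ and integer $k\geq1$, and $0$ otherwise. $g$ completely additive means $g(mn)=g(m)+g(n)$ for all positive integers $m,n$. $\ast$ is Dirichlet convolution. *)

theory Defs
  imports Complex_Main "HOL-Computational_Algebra.Primes"
begin

definition Ld :: "nat \<Rightarrow> real" where
  "Ld n = (\<Sum>p\<in>prime_factors n. real (multiplicity p n) / real p)"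

definition Lambda_Ld :: "nat \<Rightarrow> real" where
  "Lambda_Ld n = (if \<exists>p k. prime p \<and> k \<ge> 1 \<and> n = p ^ k
                  then 1 / real (THE p. prime p \<and> (\<exists>k\<ge>1. n = p ^ k)) else 0)"

definition dirichlet_conv :: "(nat \<Rightarrow> real) \<Rightarrow> (nat \<Rightarrow> real) \<Rightarrow> nat \<Rightarrow> real" where
  "dirichlet_conv f g n = (\<Sum>d | d dvd n. f d * g (n div d))"

definition completely_additive :: "(nat \<Rightarrow> real) \<Rightarrow> bool" where
  "completely_additive g \<longleftrightarrow> (\<forall>m n. m > 0 \<longrightarrow> n > 0 \<longrightarrow> g (m * n) = g m + g n)"

end

theory Submission
  imports Defs "HOL-Number_Theory.Prime_Powers"
begin

text \<open>Lambda_Ld is supported on the prime powers p^k with k \<ge> 1, where it equals 1/p.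
  Hence the convolution at n is the sum over p | n of (1/p) times the sum of g(n / p^k) for
  k = 1..\<alpha>, \<alpha> the multiplicity of p in n. Complete additivity gives
  g(n / p^k) = g(n) - k g(p), so the inner sum is \<alpha> g(n) - \<alpha>(\<alpha>+1)/2 g(p).\<close>

lemma Lambda_Ld_altdef:
  "Lambda_Ld n = (if primepow n then 1 / real (aprimedivisor n) else 0)"
proof (cases "primepow n")
  case True
  then obtain p k where pk: "prime p" "k > 0" "n = p ^ k"
    by (auto simp: primepow_def)
  have "\<exists>q j. prime q \<and> j \<ge> 1 \<and> n = q ^ j"
    using pk by (intro exI[of _ p] exI[of _ k]) simp
  moreover have "(THE q. prime q \<and> (\<exists>j\<ge>1. n = q ^ j)) = aprimedivisor n"
  proof (rule the_equality)
    show "prime (aprimedivisor n) \<and> (\<exists>j\<ge>1. n = aprimedivisor n ^ j)"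
      using pk by (simp add: aprimedivisor_prime_power) (metis One_nat_def Suc_leI)
  next
    fix q assume "prime q \<and> (\<exists>j\<ge>1. n = q ^ j)"
    then show "q = aprimedivisor n"
      by (metis One_nat_def Suc_le_eq aprimedivisor_prime_power)
  qed
  ultimately show ?thesis
    using True by (simp add: Lambda_Ld_def)
next
  case False
  then have "\<not> (\<exists>p k. prime p \<and> k \<ge> 1 \<and> n = p ^ k)"
    by (auto simp: primepow_def Suc_le_eq)
  then show ?thesis
    unfolding Lambda_Ld_def using False by (simp only: if_False)
qed

lemma Lambda_Ld_prime_power:
  assumes "prime p" "k > 0"
  shows "Lambda_Ld (p ^ k) = 1 / real p"
  using primepowI[OF assms refl] by (simp add: Lambda_Ld_altdef)

lemma sum_primepow_factors:
  fixes n :: "'a :: factorial_semiring_multiplicative"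
  assumes "n \<noteq> 0"
  shows "(\<Sum>q\<in>primepow_factors n. f q) =
           (\<Sum>p\<in>prime_factors n. \<Sum>k\<in>{0<..multiplicity p n}. f (p ^ k))"
proof -
  let ?A = "SIGMA p:prime_factors n. {0<..multiplicity p n}"
  have "primepow_factors n = (\<lambda>(p, k). p ^ k) ` ?A"
    unfolding primepow_factors_altdef[OF assms] by (auto simp: image_iff) blast
  moreover have "inj_on (\<lambda>(p, k). p ^ k) ?A"
    by (auto simp: inj_on_def prime_power_inj'' prime_factors_multiplicity)
  ultimately have "(\<Sum>q\<in>primepow_factors n. f q) = (\<Sum>(p, k)\<in>?A. f (p ^ k))"
    by (simp add: sum.reindex case_prod_unfold)
  also have "\<dots> = (\<Sum>p\<in>prime_factors n. \<Sum>k\<in>{0<..multiplicity p n}. f (p ^ k))"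
    by (rule sum.Sigma[symmetric]) auto
  finally show ?thesis .
qed

lemma dirichlet_conv_Lambda_Ld:
  assumes "n > 0"
  shows "dirichlet_conv Lambda_Ld f n =
           (\<Sum>p\<in>prime_factors n. (\<Sum>k\<in>{0<..multiplicity p n}. f (n div p ^ k)) / real p)"
proof -
  have "dirichlet_conv Lambda_Ld f n = (\<Sum>q\<in>primepow_factors n. Lambda_Ld q * f (n div q))"
    unfolding dirichlet_conv_def using assms
    by (intro sum.mono_neutral_right) (auto simp: primepow_factors_def Lambda_Ld_altdef)
  also have "\<dots> = (\<Sum>p\<in>prime_factors n. \<Sum>k\<in>{0<..multiplicity p n}.
                      Lambda_Ld (p ^ k) * f (n div p ^ k))"
    using assms by (simp add: sum_primepow_factors)
  also have "\<dots> = (\<Sum>p\<in>prime_factors n. (\<Sum>k\<in>{0<..multiplicity p n}. f (n div p ^ k)) / real p)"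
  proof (rule sum.cong[OF refl])
    fix p assume "p \<in> prime_factors n"
    then have "prime p" by (simp add: in_prime_factors_iff)
    then show "(\<Sum>k\<in>{0<..multiplicity p n}. Lambda_Ld (p ^ k) * f (n div p ^ k)) =
                 (\<Sum>k\<in>{0<..multiplicity p n}. f (n div p ^ k)) / real p"
      by (simp add: Lambda_Ld_prime_power sum_divide_distrib)
  qed
  finally show ?thesis .
qed

lemma completely_additive_1:
  assumes "completely_additive g"
  shows "g 1 = 0"
  using assms[unfolded completely_additive_def, rule_format, of 1 1] by simp

lemma completely_additive_power:
  assumes "completely_additive g" "p > 0"
  shows "g (p ^ k) = real k * g p"
proof (induction k)
  case 0
  show ?case using completely_additive_1[OF assms(1)] by simp
next
  case (Suc k)
  have "g (p * p ^ k) = g p + g (p ^ k)"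
    using assms by (simp add: completely_additive_def)
  with Suc show ?case by (simp add: algebra_simps)
qed

lemma completely_additive_div:
  assumes "completely_additive g" "d dvd n" "n > 0"
  shows "g (n div d) = g n - g d"
proof -
  have "d > 0" "n div d > 0"
    using assms(2,3) by (auto intro!: Nat.gr0I simp: dvd_div_eq_0_iff)
  then have "g (d * (n div d)) = g d + g (n div d)"
    using assms(1) by (simp add: completely_additive_def)
  with assms(2) show ?thesis by simp
qed

lemma sum_completely_additive_div_prime_powers:
  assumes "completely_additive g" "prime p" "n > 0" "m \<le> multiplicity p n"
  shows "(\<Sum>k\<in>{0<..m}. g (n div p ^ k)) = real m * g n - real m * (real m + 1) / 2 * g p"
proof -
  have "g (n div p ^ k) = g n - real k * g p" if "k \<in> {0<..m}" for k
  proof -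
    have "p ^ k dvd n"
      using that assms(4) by (intro multiplicity_dvd') simp
    with assms(1-3) show ?thesis
      by (simp add: completely_additive_div completely_additive_power prime_gt_0_nat)
  qed
  then have "(\<Sum>k\<in>{0<..m}. g (n div p ^ k)) = (\<Sum>k\<in>{0<..m}. g n - real k * g p)"
    by (rule sum.cong[OF refl])
  also have "\<dots> = real m * g n - (\<Sum>k = Suc 0..m. real k) * g p"
    by (simp only: sum_subtractf sum_distrib_right sum_constant card_greaterThanAtMost
                   atLeastSucAtMost_greaterThanAtMost) simp
  also have "\<dots> = real m * g n - real m * (real m + 1) / 2 * g p"
    using double_gauss_sum_from_Suc_0[of m, where ?'a = real] by simp
  finally show ?thesis .
qed

theorem theorem3p2:
  fixes g :: "nat \<Rightarrow> real" and n :: nat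
  assumes "completely_additive g" and "n > 0"
  shows "dirichlet_conv Lambda_Ld g n =
           g n * Ld n - (1/2) * (\<Sum>p\<in>prime_factors n.
              real (multiplicity p n) * (real (multiplicity p n) + 1) * g p / real p)"
proof -
  have "(\<Sum>k\<in>{0<..multiplicity p n}. g (n div p ^ k)) / real p =
          g n * (real (multiplicity p n) / real p)
          - (1/2) * (real (multiplicity p n) * (real (multiplicity p n) + 1) * g p / real p)"
    if "p \<in> prime_factors n" for p
    using that assms
    by (simp add: sum_completely_additive_div_prime_powers prime_factors_multiplicity
                  diff_divide_distrib)
  then have "dirichlet_conv Lambda_Ld g n = (\<Sum>p\<in>prime_factors n.
               g n * (real (multiplicity p n) / real p)
               - (1/2) * (real (multiplicity p n) * (real (multiplicity p n) + 1) * g p / real p))"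
    unfolding dirichlet_conv_Lambda_Ld[OF assms(2)] by (rule sum.cong[OF refl])
  then show ?thesis
    by (simp add: Ld_def sum_subtractf sum_distrib_left)
qed

end
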